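(* For the population protocol USD and every $t\ge1$: (1) $\mathbb E_{t-1}[\psi_t]\le\psi_{t-1}\big(1-\frac1n\big)+\frac{\beta_{t-1}-\gamma_{t-1}}{n^2}$. (2) Conditioned on $\mathcal F_{t-1}$, $\psi_t-\mathbb E_{t-1}[\psi_t]$ satisfies the $\big(\frac{150}{n},\frac{150\beta_{t-1}}{n^2}\big)$-Bernstein condition.
   Context: Vertex set $V$, $|V|=n$; opinions in $\Sigma=[k]\cup\{\bot\}$ ($\bot$ = undecided). USD update rule: $\mathsf{update}(\sigma_1,\sigma_2)=\bot$ if $\sigma_1,\sigma_2\in[k]$ and $\sigma_1\ne\sigma_2$; $=\sigma_2$ if $\sigma_1=\bot$; $=\sigma_1$ otherwise. Population protocol USD: given $\mathrm{opn}_t\in\Sigma^V$, an ordered pair $(u,v)$ is chosen uniformly from $V\times V$ (with replacement), $\mathrm{opn}_{t+1}(u)=\mathsf{update}(\mathrm{opn}_t(u),\mathrm{opn}_t(v))$, and all other vertices keep their opinions. Notation: $\alpha_t(i)=|\{u:\mathrm{opn}_t(u)=i\}|/n$, $\beta_t=\sum_{i\in[k]}\alpha_t(i)$, $\gamma_t=\sum_{i\in[k]}\alpha_t(i)^2$, $\psi_t=\beta_t(2\beta_t-1)-\gamma_t$. $(\mathcal F_t)$ is the natural filtration; $\mathbb E_{t-1}$ is conditional expectation given $\mathcal F_{t-1}$. Bernstein condition: for $D,s\ge0$, $X$ satisfies the $(D,s)$-Bernstein condition if $\mathbb E[e^{\lambda X}]\le\exp\!\big(\frac{\lambda^2 s/2}{1-|\lambda|D/3}\big)$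 for all real $\lambda$ with $|\lambda|D<3$. Conditioned on $\mathcal F_{t-1}$: the same with $\mathbb E_{t-1}$, almost surely. *)

theory Defs
  imports "HOL-Probability.Probability"
begin

text \<open>Opinions: None is the undecided opinion (bot), Some i with 1 \<le> i \<le> k are the decided ones.\<close>

definition usd_opinions :: "nat \<Rightarrow> nat option set" where
  "usd_opinions k = insert None (Some ` {1..k})"

fun usd_update :: "nat option \<Rightarrow> nat option \<Rightarrow> nat option" where
  "usd_update (Some a) (Some b) = (if a \<noteq> b then None else Some a)"
| "usd_update None s2 = s2"
| "usd_update (Some a) None = Some a"

definition usd_step :: "('v \<Rightarrow> nat option) \<Rightarrow> 'v \<times> 'v \<Rightarrow> ('v \<Rightarrow> nat option)" where
  "usd_step c p = c (fst p := usd_update (c (fst p)) (c (snd p)))"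

definition usd_pair :: "('v::finite \<times> 'v) pmf" where
  "usd_pair = pmf_of_set UNIV"

definition usd_alpha :: "('v::finite \<Rightarrow> nat option) \<Rightarrow> nat \<Rightarrow> real" where
  "usd_alpha c i = real (card {u. c u = Some i}) / real CARD('v)"

definition usd_beta :: "nat \<Rightarrow> ('v::finite \<Rightarrow> nat option) \<Rightarrow> real" where
  "usd_beta k c = (\<Sum>i\<in>{1..k}. usd_alpha c i)"

definition usd_gamma :: "nat \<Rightarrow> ('v::finite \<Rightarrow> nat option) \<Rightarrow> real" where
  "usd_gamma k c = (\<Sum>i\<in>{1..k}. (usd_alpha c i)\<^sup>2)"

definition usd_psi :: "nat \<Rightarrow> ('v::finite \<Rightarrow> nat option) \<Rightarrow> real" where
  "usd_psi k c = usd_beta k c * (2 * usd_beta k c - 1) - usd_gamma k c"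

definition bernstein_condition :: "'a measure \<Rightarrow> ('a \<Rightarrow> real) \<Rightarrow> real \<Rightarrow> real \<Rightarrow> bool" where
  "bernstein_condition M X D s \<longleftrightarrow>
     (\<forall>l::real. \<bar>l\<bar> * D < 3 \<longrightarrow>
        (\<integral>x. exp (l * X x) \<partial>M) \<le> exp ((l\<^sup>2 * s / 2) / (1 - \<bar>l\<bar> * D / 3)))"

end

theory Submission
  imports Defs
begin

(* One interaction changes a single coordinate of alpha by 1/n, and psi is quadratic in alpha,
   so the increment of psi is an explicit function of the two opinions involved.  Averaging it
   over the uniform pair gives the exact drift
     - psi/n + (beta - gamma)/n^2 - (2/n) * sum_i alpha_i (2 beta - 1 - alpha_i)^2,
   whose last term is nonpositive.  The increment is at most 4/n in absolute value and vanishes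
   when the observed vertex is undecided, so its second moment is at most 16 beta/n^2; a centred
   variable of this size satisfies the Bernstein condition because exp x <= 1 + x + x^2 on
   [-1, 1]. *)

lemma exp_le_one_plus_x_plus_square:
  fixes x :: real
  assumes "\<bar>x\<bar> \<le> 1"
  shows "exp x \<le> 1 + x + x\<^sup>2"
proof (cases "0 \<le> x")
  case True
  then show ?thesis using exp_bound assms by auto
next
  case False
  define y where "y = - x"
  have y: "0 < y" "y \<le> 1" using False assms by (auto simp: y_def)
  have "1 \<le> (1 - y + y\<^sup>2) * (1 + y + y\<^sup>2 / 2)"
  proof -
    have "(1 - y + y\<^sup>2) * (1 + y + y\<^sup>2 / 2) = 1 + y\<^sup>2 / 2 + y ^ 3 / 2 + y ^ 4 / 2"
      by (simp add: field_simps power2_eq_square power3_eq_cube power4_eq_xxxx)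
    then show ?thesis using y by simp
  qed
  also have "\<dots> \<le> (1 - y + y\<^sup>2) * exp y"
  proof (rule mult_left_mono)
    show "1 + y + y\<^sup>2 / 2 \<le> exp y" using exp_lower_Taylor_quadratic y by simp
    show "0 \<le> 1 - y + y\<^sup>2" using y by (simp add: power2_eq_square)
  qed
  finally have "exp (- y) \<le> 1 - y + y\<^sup>2" by (simp add: exp_minus field_simps)
  then show ?thesis by (simp add: y_def)
qed

lemma (in prob_space) expectation_exp_le_exp_second_moment:
  fixes Y :: "'a \<Rightarrow> real"
  assumes Y: "Y \<in> borel_measurable M"
    and bounded: "AE x in M. \<bar>Y x\<bar> \<le> 1"
    and centred: "expectation Y = 0"
  shows "expectation (\<lambda>x. exp (Y x)) \<le> exp (expectation (\<lambda>x. (Y x)\<^sup>2))"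
proof -
  have int_Y: "integrable M Y"
    using bounded Y by (intro integrable_const_bound[where B = 1]) auto
  have int_Y2: "integrable M (\<lambda>x. (Y x)\<^sup>2)"
    using bounded Y
    by (intro integrable_const_bound[where B = 1]) (auto elim!: eventually_mono simp: abs_square_le_1)
  have int_exp: "integrable M (\<lambda>x. exp (Y x))"
    using bounded Y by (intro integrable_const_bound[where B = "exp 1"]) auto
  have "expectation (\<lambda>x. exp (Y x)) \<le> expectation (\<lambda>x. 1 + Y x + (Y x)\<^sup>2)"
    using bounded int_Y int_Y2 int_exp
    by (intro integral_mono_AE) (auto elim!: eventually_mono intro: exp_le_one_plus_x_plus_square)
  also have "\<dots> = 1 + expectation (\<lambda>x. (Y x)\<^sup>2)"
    using int_Y int_Y2 centred by (simp add: prob_space)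
  also have "\<dots> \<le> exp (expectation (\<lambda>x. (Y x)\<^sup>2))"
    by (rule exp_ge_add_one_self[THEN order.trans[rotated]]) (simp add: add.commute)
  finally show ?thesis .
qed

lemma (in prob_space) variance_le_expectation_power2_diff:
  fixes X :: "'a \<Rightarrow> real"
  assumes "integrable M X" "integrable M (\<lambda>x. (X x)\<^sup>2)"
  shows "variance X \<le> expectation (\<lambda>x. (X x - a)\<^sup>2)"
proof -
  have "expectation (\<lambda>x. (X x - a)\<^sup>2) = variance X + (expectation X - a)\<^sup>2"
    using assms by (simp add: variance_eq power2_diff prob_space algebra_simps power2_eq_square)
  then show ?thesis by simp
qed

lemma (in prob_space) abs_expectation_diff_le:
  fixes X :: "'a \<Rightarrow> real"
  assumes "integrable M X" and bounded: "AE x in M. \<bar>X x - a\<bar> \<le> B"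
  shows "\<bar>expectation X - a\<bar> \<le> B"
proof -
  have "\<bar>expectation X - a\<bar> = \<bar>expectation (\<lambda>x. X x - a)\<bar>"
    using assms by (simp add: prob_space)
  also have "\<dots> \<le> expectation (\<lambda>x. \<bar>X x - a\<bar>)"
    by (rule integral_abs_bound)
  also have "\<dots> \<le> B"
    using integral_mono_AE[of M "\<lambda>x. \<bar>X x - a\<bar>" "\<lambda>_. B"] assms by (simp add: prob_space)
  finally show ?thesis .
qed

lemma (in prob_space) expectation_exp_centred_le:
  fixes X :: "'a \<Rightarrow> real"
  assumes X: "X \<in> borel_measurable M"
    and bounded: "AE x in M. \<bar>X x - a\<bar> \<le> B"
    and l: "\<bar>l\<bar> * (2 * B) \<le> 1"
  shows "expectation (\<lambda>x. exp (l * (X x - expectation X)))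
    \<le> exp (l\<^sup>2 * expectation (\<lambda>x. (X x - a)\<^sup>2))"
proof -
  have bounded_abs: "AE x in M. \<bar>X x\<bar> \<le> \<bar>a\<bar> + B"
    using bounded by eventually_elim linarith
  have int_X: "integrable M X"
    using bounded_abs X by (intro integrable_const_bound[where B = "\<bar>a\<bar> + B"]) auto
  have int_X2: "integrable M (\<lambda>x. (X x)\<^sup>2)"
    using bounded_abs X
    by (intro integrable_const_bound[where B = "(\<bar>a\<bar> + B)\<^sup>2"])
       (auto elim!: eventually_mono simp: abs_le_square_iff[symmetric])
  define Y where "Y = (\<lambda>x. l * (X x - expectation X))"
  have "AE x in M. \<bar>Y x\<bar> \<le> 1"
    using bounded
  proof eventually_elim
    case (elim x)
    have "\<bar>X x - expectation X\<bar> \<le> 2 * B"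
      using elim abs_expectation_diff_le[OF int_X bounded] by linarith
    then have "\<bar>l\<bar> * \<bar>X x - expectation X\<bar> \<le> \<bar>l\<bar> * (2 * B)"
      by (intro mult_left_mono) auto
    then show ?case using l by (simp add: Y_def abs_mult)
  qed
  moreover have "expectation Y = 0"
    using int_X by (simp add: Y_def prob_space)
  ultimately have "expectation (\<lambda>x. exp (Y x)) \<le> exp (expectation (\<lambda>x. (Y x)\<^sup>2))"
    using X by (intro expectation_exp_le_exp_second_moment) (auto simp: Y_def)
  also have "expectation (\<lambda>x. (Y x)\<^sup>2) = l\<^sup>2 * variance X"
    by (simp add: Y_def power_mult_distrib)
  also have "\<dots> \<le> l\<^sup>2 * expectation (\<lambda>x. (X x - a)\<^sup>2)"
    using variance_le_expectation_power2_diff[OF int_X int_X2] by (intro mult_left_mono) auto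
  finally show ?thesis
    by (simp add: Y_def)
qed

lemma (in prob_space) bernstein_condition_of_bounded:
  fixes X :: "'a \<Rightarrow> real"
  assumes X: "X \<in> borel_measurable M"
    and bounded: "AE x in M. \<bar>X x - a\<bar> \<le> B"
    and second_moment: "expectation (\<lambda>x. (X x - a)\<^sup>2) \<le> V"
    and "0 \<le> B" "6 * B \<le> D" "2 * V \<le> s"
  shows "bernstein_condition M (\<lambda>x. X x - expectation X) D s"
  unfolding bernstein_condition_def
proof (intro allI impI)
  fix l :: real
  assume l: "\<bar>l\<bar> * D < 3"
  have "\<bar>l\<bar> * (6 * B) \<le> \<bar>l\<bar> * D"
    using \<open>6 * B \<le> D\<close> by (intro mult_left_mono) auto
  then have "\<bar>l\<bar> * (2 * B) \<le> 1"
    using l by linarith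
  then have "expectation (\<lambda>x. exp (l * (X x - expectation X)))
      \<le> exp (l\<^sup>2 * expectation (\<lambda>x. (X x - a)\<^sup>2))"
    by (rule expectation_exp_centred_le[OF X bounded])
  also have "\<dots> \<le> exp (l\<^sup>2 * V)"
    using second_moment by (simp add: mult_left_mono)
  also have "\<dots> \<le> exp (l\<^sup>2 * s / 2 / (1 - \<bar>l\<bar> * D / 3))"
  proof -
    have "0 \<le> V"
      by (rule order.trans[OF integral_nonneg_AE second_moment]) simp
    moreover have "0 \<le> D" "\<bar>l\<bar> * D / 3 < 1"
      using \<open>0 \<le> B\<close> \<open>6 * B \<le> D\<close> l by auto
    ultimately have "l\<^sup>2 * V * (1 - \<bar>l\<bar> * D / 3) \<le> l\<^sup>2 * V"
      by (intro mult_right_le_one_le) auto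
    also have "\<dots> \<le> l\<^sup>2 * s / 2"
      using \<open>2 * V \<le> s\<close> mult_left_mono[of "2 * V" s "l\<^sup>2"] by simp
    finally have "l\<^sup>2 * V * (1 - \<bar>l\<bar> * D / 3) \<le> l\<^sup>2 * s / 2" .
    then show ?thesis
      using \<open>\<bar>l\<bar> * D / 3 < 1\<close> by (subst exp_le_cancel_iff, subst pos_le_divide_eq) auto
  qed
  finally show "(\<integral>x. exp (l * (X x - expectation X)) \<partial>M)
      \<le> exp (l\<^sup>2 * s / 2 / (1 - \<bar>l\<bar> * D / 3))" .
qed

lemma card_fun_upd_preimage:
  fixes c :: "'v::finite \<Rightarrow> 'b"
  shows "real (card {w. (c(u := x)) w = y})
    = real (card {w. c w = y}) - of_bool (c u = y) + of_bool (x = y)"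
proof -
  have count:
    "real (card {w. f w = y}) = of_bool (f u = y) + (\<Sum>w\<in>UNIV - {u}. of_bool (f w = y))"
    for f :: "'v \<Rightarrow> 'b"
  proof -
    have "real (card {w. f w = y}) = (\<Sum>w\<in>UNIV. of_bool (f w = y))"
      by simp
    also have "\<dots> = of_bool (f u = y) + (\<Sum>w\<in>UNIV - {u}. of_bool (f w = y))"
      by (rule sum.remove) auto
    finally show ?thesis .
  qed
  have "(\<Sum>w\<in>UNIV - {u}. of_bool ((c(u := x)) w = y))
      = (\<Sum>w\<in>UNIV - {u}. (of_bool (c w = y) :: real))"
    by (intro sum.cong) auto
  then show ?thesis
    using count[of "c(u := x)"] count[of c] by simp
qed

lemma usd_alpha_fun_upd:
  fixes c :: "'v::finite \<Rightarrow> nat option"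
  shows "usd_alpha (c(u := x)) i
    = usd_alpha c i + (of_bool (x = Some i) - of_bool (c u = Some i)) / real CARD('v)"
  unfolding usd_alpha_def card_fun_upd_preimage by (simp add: field_simps)

lemma usd_psi_shift:
  assumes alpha: "\<And>m. usd_alpha c' m = usd_alpha c m + (if m = i then e else 0)"
    and i: "i \<in> {1..k}"
  shows "usd_psi k c' = usd_psi k c + e * (4 * usd_beta k c - 1 - 2 * usd_alpha c i) + e\<^sup>2"
proof -
  have beta: "usd_beta k c' = usd_beta k c + e"
    using i by (simp add: usd_beta_def alpha sum.distrib)
  have "usd_gamma k c'
      = (\<Sum>m\<in>{1..k}. (usd_alpha c m)\<^sup>2 + (if m = i then 2 * usd_alpha c i * e + e\<^sup>2 else 0))"
    unfolding usd_gamma_def alpha by (intro sum.cong) (auto simp: power2_sum)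
  then have gamma: "usd_gamma k c' = usd_gamma k c + 2 * usd_alpha c i * e + e\<^sup>2"
    using i by (simp add: usd_gamma_def sum.distrib)
  show ?thesis
    unfolding usd_psi_def beta gamma by (simp add: algebra_simps power2_eq_square)
qed

definition usd_psi_increment ::
    "nat \<Rightarrow> ('v::finite \<Rightarrow> nat option) \<Rightarrow> nat option \<Rightarrow> nat option \<Rightarrow> real" where
  "usd_psi_increment k c x y = (case (x, y) of
       (_, None) \<Rightarrow> 0
     | (None, Some j) \<Rightarrow>
         (4 * usd_beta k c - 1 - 2 * usd_alpha c j) / real CARD('v) + 1 / (real CARD('v))\<^sup>2
     | (Some i, Some j) \<Rightarrow> if i = j then 0 else
         (1 - 4 * usd_beta k c + 2 * usd_alpha c i) / real CARD('v) + 1 / (real CARD('v))\<^sup>2)"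

lemma usd_psi_usd_step:
  fixes c :: "'v::finite \<Rightarrow> nat option"
  assumes valid: "\<forall>w. c w \<in> usd_opinions k"
  shows "usd_psi k (usd_step c (u, v)) = usd_psi k c + usd_psi_increment k c (c u) (c v)"
proof -
  define h where "h = 1 / real CARD('v)"
  show ?thesis
  proof (cases "c v")
    case None
    then show ?thesis
      by (cases "c u") (simp_all add: usd_step_def usd_psi_increment_def fun_upd_idem)
  next
    case (Some j)
    show ?thesis
    proof (cases "c u")
      case None
      have "usd_psi k (c(u := Some j))
          = usd_psi k c + h * (4 * usd_beta k c - 1 - 2 * usd_alpha c j) + h\<^sup>2"
        using None Some valid[rule_format, of v]
        by (intro usd_psi_shift) (auto simp: usd_alpha_fun_upd h_def usd_opinions_def)
      then show ?thesis
        using None Some by (simp add: usd_step_def usd_psi_increment_def h_def power_one_over)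
    next
      case (Some i)
      show ?thesis
      proof (cases "i = j")
        case True
        then show ?thesis
          using Some \<open>c v = Some j\<close> by (simp add: usd_step_def usd_psi_increment_def fun_upd_idem)
      next
        case False
        have "usd_psi k (c(u := None))
            = usd_psi k c + (- h) * (4 * usd_beta k c - 1 - 2 * usd_alpha c i) + (- h)\<^sup>2"
          using Some valid[rule_format, of u]
          by (intro usd_psi_shift) (auto simp: usd_alpha_fun_upd h_def usd_opinions_def)
        then show ?thesis
          using Some \<open>c v = Some j\<close> False
          by (simp add: usd_step_def usd_psi_increment_def h_def power_one_over
              diff_divide_distrib add_divide_distrib)
      qed
    qed
  qed
qed

lemma sum_usd_config_by_count:
  fixes c :: "'v::finite \<Rightarrow> nat option" and F :: "nat option \<Rightarrow> real"
  assumes valid: "\<forall>w. c w \<in> usd_opinions k"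
  shows "(\<Sum>w\<in>UNIV. F (c w)) = real (card {w. c w = None}) * F None
           + (\<Sum>j\<in>{1..k}. real (card {w. c w = Some j}) * F (Some j))"
proof -
  have "(\<Sum>w\<in>UNIV. F (c w)) = (\<Sum>y\<in>usd_opinions k. \<Sum>w\<in>{w\<in>UNIV. c w = y}. F (c w))"
    using valid by (intro sum.group[symmetric]) (auto simp: usd_opinions_def)
  also have "\<dots> = (\<Sum>y\<in>usd_opinions k. real (card {w. c w = y}) * F y)"
    by (intro sum.cong) auto
  also have "\<dots> = real (card {w. c w = None}) * F None
           + (\<Sum>j\<in>{1..k}. real (card {w. c w = Some j}) * F (Some j))"
    by (auto simp: usd_opinions_def sum.reindex)
  finally show ?thesis .
qed

lemma card_usd_undecided:
  fixes c :: "'v::finite \<Rightarrow> nat option"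
  assumes valid: "\<forall>w. c w \<in> usd_opinions k"
  shows "real (card {w. c w = None}) = real CARD('v) * (1 - usd_beta k c)"
proof -
  have total: "real CARD('v)
      = real (card {w. c w = None}) + (\<Sum>j\<in>{1..k}. real (card {w. c w = Some j}))"
    using sum_usd_config_by_count[OF valid, of "\<lambda>_. 1"] by simp
  have "real CARD('v) * usd_beta k c = (\<Sum>j\<in>{1..k}. real (card {w. c w = Some j}))"
    by (simp add: usd_beta_def usd_alpha_def sum_distrib_left)
  then show ?thesis
    using total by (simp add: right_diff_distrib)
qed

lemma sum_usd_config:
  fixes c :: "'v::finite \<Rightarrow> nat option" and F :: "nat option \<Rightarrow> real"
  assumes valid: "\<forall>w. c w \<in> usd_opinions k"
  shows "(\<Sum>w\<in>UNIV. F (c w)) = real CARD('v)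
           * ((1 - usd_beta k c) * F None + (\<Sum>j\<in>{1..k}. usd_alpha c j * F (Some j)))"
  unfolding sum_usd_config_by_count[OF valid] card_usd_undecided[OF valid]
  by (simp add: usd_alpha_def sum_distrib_left algebra_simps)

lemma usd_alpha_nonneg: "0 \<le> usd_alpha c i"
  by (simp add: usd_alpha_def)

lemma usd_beta_nonneg: "0 \<le> usd_beta k c"
  by (simp add: usd_beta_def usd_alpha_nonneg sum_nonneg)

lemma usd_alpha_le_usd_beta: "i \<in> {1..k} \<Longrightarrow> usd_alpha c i \<le> usd_beta k c"
  unfolding usd_beta_def by (rule member_le_sum) (auto simp: usd_alpha_nonneg)

lemma usd_beta_le_one:
  fixes c :: "'v::finite \<Rightarrow> nat option"
  assumes "\<forall>w. c w \<in> usd_opinions k"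
  shows "usd_beta k c \<le> 1"
proof -
  have "0 \<le> real CARD('v) * (1 - usd_beta k c)"
    by (simp flip: card_usd_undecided[OF assms])
  then show ?thesis by (simp add: zero_le_mult_iff)
qed

lemma expectation_usd_pair:
  "measure_pmf.expectation (usd_pair :: ('v::finite \<times> 'v) pmf) f
    = (\<Sum>u\<in>UNIV. \<Sum>v\<in>UNIV. f (u, v)) / (real CARD('v))\<^sup>2"
  unfolding usd_pair_def
  by (simp add: integral_pmf_of_set sum.cartesian_product UNIV_Times_UNIV power2_eq_square)

lemma expectation_usd_pair_opinions:
  fixes c :: "'v::finite \<Rightarrow> nat option" and g :: "nat option \<Rightarrow> nat option \<Rightarrow> real"
  assumes valid: "\<forall>w. c w \<in> usd_opinions k"
    and undecided_responder: "\<And>x. g x None = 0"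
  shows "measure_pmf.expectation usd_pair (\<lambda>p. g (c (fst p)) (c (snd p)))
    = (1 - usd_beta k c) * (\<Sum>j\<in>{1..k}. usd_alpha c j * g None (Some j))
      + (\<Sum>i\<in>{1..k}. usd_alpha c i * (\<Sum>j\<in>{1..k}. usd_alpha c j * g (Some i) (Some j)))"
proof -
  define G where "G x = (\<Sum>j\<in>{1..k}. usd_alpha c j * g x (Some j))" for x
  have "(\<Sum>u\<in>UNIV. \<Sum>v\<in>UNIV. g (c u) (c v)) = (\<Sum>u\<in>UNIV. real CARD('v) * G (c u))"
    by (simp add: sum_usd_config[OF valid] undecided_responder G_def)
  also have "\<dots> = (real CARD('v))\<^sup>2 * ((1 - usd_beta k c) * G None
      + (\<Sum>i\<in>{1..k}. usd_alpha c i * G (Some i)))"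
    unfolding sum_distrib_left[symmetric] sum_usd_config[OF valid, of G]
    by (simp add: power2_eq_square)
  finally show ?thesis
    by (simp add: expectation_usd_pair G_def)
qed

(* a, b, g play the roles of alpha, beta, gamma and h that of 1/n; the two sums on the left are
   the contributions of an undecided and of a decided updating vertex. *)
lemma usd_drift_identity:
  fixes a :: "'i \<Rightarrow> real" and h :: real
  assumes K: "finite K"
  defines "b \<equiv> \<Sum>i\<in>K. a i" and "g \<equiv> \<Sum>i\<in>K. (a i)\<^sup>2"
  shows "(1 - b) * (\<Sum>j\<in>K. a j * ((4 * b - 1 - 2 * a j) * h + h\<^sup>2))
      + (\<Sum>i\<in>K. a i * (\<Sum>j\<in>K. a j * (if i = j then 0 else (1 - 4 * b + 2 * a i) * h + h\<^sup>2)))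
    = - h * (b * (2 * b - 1) - g) + h\<^sup>2 * (b - g) - 2 * h * (\<Sum>i\<in>K. a i * (2 * b - 1 - a i)\<^sup>2)"
proof -
  define \<kappa> where "\<kappa> = (\<Sum>i\<in>K. a i ^ 3)"
  have cubic: "(\<Sum>i\<in>K. p * a i + q * (a i)\<^sup>2 + r * a i ^ 3) = p * b + q * g + r * \<kappa>"
    for p q r
    by (simp add: b_def g_def \<kappa>_def sum.distrib sum_distrib_left)
  have adopt: "(\<Sum>j\<in>K. a j * ((4 * b - 1 - 2 * a j) * h + h\<^sup>2))
      = ((4 * b - 1) * h + h\<^sup>2) * b + (- 2 * h) * g + 0 * \<kappa>"
    unfolding cubic[symmetric] by (intro sum.cong) (simp_all add: algebra_simps power2_eq_square)
  have inner: "(\<Sum>j\<in>K. a j * (if i = j then 0 else C)) = C * (b - a i)" if "i \<in> K" for i C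
  proof -
    have "(\<Sum>j\<in>K. a j * (if i = j then 0 else C)) = (\<Sum>j\<in>K. C * a j - (if i = j then C * a i else 0))"
      by (intro sum.cong) auto
    then show ?thesis
      using K that by (simp add: sum_subtractf b_def sum_distrib_left right_diff_distrib)
  qed
  have "(\<Sum>i\<in>K. a i * (\<Sum>j\<in>K. a j * (if i = j then 0 else (1 - 4 * b + 2 * a i) * h + h\<^sup>2)))
      = (\<Sum>i\<in>K. a i * (((1 - 4 * b + 2 * a i) * h + h\<^sup>2) * (b - a i)))"
    by (intro sum.cong) (simp_all only: inner)
  also have "\<dots> = ((1 - 4 * b) * h + h\<^sup>2) * b * b + (2 * h * b - (1 - 4 * b) * h - h\<^sup>2) * g
      + (- 2 * h) * \<kappa>"
    unfolding cubic[symmetric]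
    by (intro sum.cong) (simp_all add: algebra_simps power2_eq_square power3_eq_cube)
  finally have clash: "(\<Sum>i\<in>K. a i
        * (\<Sum>j\<in>K. a j * (if i = j then 0 else (1 - 4 * b + 2 * a i) * h + h\<^sup>2)))
      = ((1 - 4 * b) * h + h\<^sup>2) * b * b + (2 * h * b - (1 - 4 * b) * h - h\<^sup>2) * g
        + (- 2 * h) * \<kappa>" .
  have square: "(\<Sum>i\<in>K. a i * (2 * b - 1 - a i)\<^sup>2)
      = (2 * b - 1)\<^sup>2 * b + (- 2 * (2 * b - 1)) * g + 1 * \<kappa>"
    unfolding cubic[symmetric]
    by (intro sum.cong) (simp_all add: algebra_simps power2_eq_square power3_eq_cube)
  show ?thesis
    unfolding adopt clash square by (simp add: algebra_simps power2_eq_square)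
qed

lemma expectation_usd_psi_step:
  fixes c :: "'v::finite \<Rightarrow> nat option"
  assumes valid: "\<forall>w. c w \<in> usd_opinions k"
  shows "measure_pmf.expectation usd_pair (\<lambda>p. usd_psi k (usd_step c p))
    = usd_psi k c * (1 - 1 / real CARD('v)) + (usd_beta k c - usd_gamma k c) / (real CARD('v))\<^sup>2
      - 2 / real CARD('v) * (\<Sum>i\<in>{1..k}. usd_alpha c i * (2 * usd_beta k c - 1 - usd_alpha c i)\<^sup>2)"
proof -
  let ?incr = "\<lambda>p. usd_psi_increment k c (c (fst p)) (c (snd p))"
  have "measure_pmf.expectation usd_pair (\<lambda>p. usd_psi k (usd_step c p))
      = measure_pmf.expectation usd_pair (\<lambda>p. usd_psi k c + ?incr p)"
    using usd_psi_usd_step[OF valid] by (metis prod.collapse)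
  also have "\<dots> = usd_psi k c + measure_pmf.expectation usd_pair ?incr"
    by (simp add: integrable_measure_pmf_finite)
  also have "measure_pmf.expectation usd_pair ?incr
      = (1 - usd_beta k c) * (\<Sum>j\<in>{1..k}. usd_alpha c j * usd_psi_increment k c None (Some j))
        + (\<Sum>i\<in>{1..k}. usd_alpha c i
            * (\<Sum>j\<in>{1..k}. usd_alpha c j * usd_psi_increment k c (Some i) (Some j)))"
    by (rule expectation_usd_pair_opinions[OF valid]) (simp add: usd_psi_increment_def split: option.split)
  also have "\<dots>
      = - usd_psi k c / real CARD('v) + (usd_beta k c - usd_gamma k c) / (real CARD('v))\<^sup>2
        - 2 / real CARD('v) * (\<Sum>i\<in>{1..k}. usd_alpha c i * (2 * usd_beta k c - 1 - usd_alpha c i)\<^sup>2)"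
    using usd_drift_identity[of "{1..k}" "usd_alpha c" "1 / real CARD('v)"]
    by (simp add: usd_psi_increment_def usd_psi_def usd_beta_def usd_gamma_def power_one_over
        diff_divide_distrib cong: if_cong)
  finally show ?thesis
    by (simp add: algebra_simps)
qed

lemma abs_usd_psi_increment_le:
  fixes c :: "'v::finite \<Rightarrow> nat option"
  assumes valid: "\<forall>w. c w \<in> usd_opinions k"
  shows "\<bar>usd_psi_increment k c (c u) (c v)\<bar> \<le> 4 / real CARD('v)"
proof -
  have n: "1 \<le> real CARD('v)"
    by (simp add: Suc_le_eq)
  have small: "\<bar>t / real CARD('v) + 1 / (real CARD('v))\<^sup>2\<bar> \<le> 4 / real CARD('v)"
    if "\<bar>t\<bar> \<le> 3" for t
  proof -
    have "\<bar>t / real CARD('v) + 1 / (real CARD('v))\<^sup>2\<bar> \<le> 3 / real CARD('v) + 1 / real CARD('v)"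
      using n that by (intro abs_triangle_ineq[THEN order.trans] add_mono)
        (auto simp: abs_divide divide_right_mono power2_eq_square divide_le_eq)
    then show ?thesis by simp
  qed
  have bounds: "0 \<le> usd_alpha c i" "usd_alpha c i \<le> usd_beta k c" "usd_beta k c \<le> 1"
    if "c w = Some i" for w i
    using valid[rule_format, of w] that
    by (auto simp: usd_alpha_nonneg usd_alpha_le_usd_beta usd_beta_le_one[OF valid] usd_opinions_def)
  show ?thesis
    using bounds[of v] bounds[of u] usd_beta_nonneg[of k c]
    by (cases "c u"; cases "c v") (auto simp: usd_psi_increment_def intro!: small)
qed

lemma expectation_usd_psi_step_sq_le:
  fixes c :: "'v::finite \<Rightarrow> nat option"
  assumes valid: "\<forall>w. c w \<in> usd_opinions k"
  shows "measure_pmf.expectation usd_pair (\<lambda>p. (usd_psi k (usd_step c p) - usd_psi k c)\<^sup>2)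
    \<le> 16 * usd_beta k c / (real CARD('v))\<^sup>2"
proof -
  define C where "C = 16 / (real CARD('v))\<^sup>2"
  have pointwise: "(usd_psi k (usd_step c p) - usd_psi k c)\<^sup>2 \<le> C * of_bool (c (snd p) \<noteq> None)"
    for p
  proof (cases "c (snd p)")
    case (Some j)
    have "(usd_psi_increment k c (c (fst p)) (c (snd p)))\<^sup>2 \<le> (4 / real CARD('v))\<^sup>2"
      using abs_usd_psi_increment_le[OF valid] abs_le_square_iff by fastforce
    then show ?thesis
      using Some usd_psi_usd_step[OF valid, of "fst p" "snd p"] by (simp add: C_def power_divide)
  next
    case None
    then show ?thesis
      using usd_psi_usd_step[OF valid, of "fst p" "snd p"]
      by (cases "c (fst p)") (simp_all add: usd_psi_increment_def)
  qed
  then have "measure_pmf.expectation usd_pair (\<lambda>p. (usd_psi k (usd_step c p) - usd_psi k c)\<^sup>2)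
      \<le> measure_pmf.expectation usd_pair (\<lambda>p. C * of_bool (c (snd p) \<noteq> None))"
    by (intro integral_mono integrable_measure_pmf_finite) simp_all
  also have "\<dots> = (1 - usd_beta k c) * (usd_beta k c * C) + usd_beta k c * (usd_beta k c * C)"
    by (subst expectation_usd_pair_opinions[OF valid, of "\<lambda>_ y. C * of_bool (y \<noteq> None)"])
       (simp_all add: usd_beta_def flip: sum_distrib_right)
  also have "\<dots> = usd_beta k c * C"
    by (simp add: algebra_simps)
  finally show ?thesis
    by (simp add: C_def mult.commute)
qed

theorem mainTheorem14:
  fixes k :: nat and c :: "'v::finite \<Rightarrow> nat option"
  assumes "\<forall>u. c u \<in> usd_opinions k"
  shows "measure_pmf.expectation usd_pair (\<lambda>p. usd_psi k (usd_step c p))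
           \<le> usd_psi k c * (1 - 1 / real CARD('v))
             + (usd_beta k c - usd_gamma k c) / (real CARD('v))\<^sup>2
         \<and> bernstein_condition (measure_pmf usd_pair)
           (\<lambda>p. usd_psi k (usd_step c p)
                - measure_pmf.expectation usd_pair (\<lambda>q. usd_psi k (usd_step c q)))
           (150 / real CARD('v)) (150 * usd_beta k c / (real CARD('v))\<^sup>2)"
proof
  have "0 \<le> (\<Sum>i\<in>{1..k}. usd_alpha c i * (2 * usd_beta k c - 1 - usd_alpha c i)\<^sup>2)"
    by (intro sum_nonneg) (simp add: usd_alpha_nonneg)
  then show "measure_pmf.expectation usd_pair (\<lambda>p. usd_psi k (usd_step c p))
      \<le> usd_psi k c * (1 - 1 / real CARD('v)) + (usd_beta k c - usd_gamma k c) / (real CARD('v))\<^sup>2"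
    unfolding expectation_usd_psi_step[OF assms] by simp
  show "bernstein_condition (measure_pmf usd_pair)
      (\<lambda>p. usd_psi k (usd_step c p) - measure_pmf.expectation usd_pair (\<lambda>q. usd_psi k (usd_step c q)))
      (150 / real CARD('v)) (150 * usd_beta k c / (real CARD('v))\<^sup>2)"
  proof (rule measure_pmf.bernstein_condition_of_bounded)
    show "AE p in measure_pmf usd_pair. \<bar>usd_psi k (usd_step c p) - usd_psi k c\<bar> \<le> 4 / real CARD('v)"
      using abs_usd_psi_increment_le[OF assms] by (simp add: usd_psi_usd_step[OF assms] split_paired_all)
    show "measure_pmf.expectation usd_pair (\<lambda>p. (usd_psi k (usd_step c p) - usd_psi k c)\<^sup>2)
        \<le> 16 * usd_beta k c / (real CARD('v))\<^sup>2"
      by (rule expectation_usd_psi_step_sq_le[OF assms])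
    show "2 * (16 * usd_beta k c / (real CARD('v))\<^sup>2) \<le> 150 * usd_beta k c / (real CARD('v))\<^sup>2"
      using usd_beta_nonneg[of k c] by (simp add: divide_right_mono)
    show "6 * (4 / real CARD('v)) \<le> 150 / real CARD('v)"
      by (simp add: divide_right_mono)
  qed auto
qed

end
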